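(* Let $A \in \{0,1\}^{X\times Y}$ be a combinatorial channel and let $E=\{(x,y) : A_{x,y}=1\}$ be the edge set of its channel graph. Then \[ |X| + |Y| - |E| \le p(A). \] Moreover, for any nonempty finite sets $X$, $Y$ and any nonempty $R \subseteq Y$ with $|R| \le |X|$, there is a combinatorial channel $A \in \{0,1\}^{X\times Y}$ whose edge set satisfies $|E| = |X| + |Y| - |R|$ and such that $R$ is an output covering in $A$ (every $x \in X$ has $A_{x,y}=1$ for some $y \in R$).
   Context: A combinatorial channel is a matrix $A \in \{0,1\}^{X\times Y}$ ($X,Y$ finite) in which every row and column contains a $1$. For $y\in Y$, $N(y)=\{x : A_{x,y}=1\}$. A code is a set $C\subseteq X$ with $|N(y)\cap C|\le 1$ for all $y$, and $p(A)$ is the maximum size of a code. *)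

theory Defs
  imports Main
begin

text \<open>A 0/1 matrix A indexed by X x Y is represented by its support (edge set of the
channel graph) E = {(x,y). A_{x,y} = 1}, a subset of X \<times> Y.\<close>

definition comb_channel :: "'a set \<Rightarrow> 'b set \<Rightarrow> ('a \<times> 'b) set \<Rightarrow> bool" where
  "comb_channel X Y E \<longleftrightarrow> finite X \<and> finite Y \<and> E \<subseteq> X \<times> Y \<and>
     (\<forall>x\<in>X. \<exists>y. (x, y) \<in> E) \<and> (\<forall>y\<in>Y. \<exists>x. (x, y) \<in> E)"

definition Nbr :: "('a \<times> 'b) set \<Rightarrow> 'b \<Rightarrow> 'a set" where
  "Nbr E y = {x. (x, y) \<in> E}"

definition is_code :: "'a set \<Rightarrow> 'b set \<Rightarrow> ('a \<times> 'b) set \<Rightarrow> 'a set \<Rightarrow> bool" where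
  "is_code X Y E C \<longleftrightarrow> C \<subseteq> X \<and> (\<forall>y\<in>Y. card (Nbr E y \<inter> C) \<le> 1)"

definition p_channel :: "'a set \<Rightarrow> 'b set \<Rightarrow> ('a \<times> 'b) set \<Rightarrow> nat" where
  "p_channel X Y E = Max (card ` {C. is_code X Y E C})"

definition output_covering :: "'a set \<Rightarrow> ('a \<times> 'b) set \<Rightarrow> 'b set \<Rightarrow> bool" where
  "output_covering X E R \<longleftrightarrow> (\<forall>x\<in>X. \<exists>y\<in>R. (x, y) \<in> E)"

end

theory Submission
  imports Defs
begin

text \<open>Grow the edge set one edge at a time while maintaining a set C \<subseteq> X of inputs no two
of which share an output, starting from C = X with no edges. A new edge (x, y) either keeps C
such a set, or it creates a collision; then x \<in> C and y was already an output, and deleting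
x from C repairs it. Either way |C| + |E| - |X| - |outputs of E| never decreases, and at the
end the outputs of E are all of Y.

For sharpness, join the inputs to R by a surjection X \<rightarrow> R and join one input to every
output outside R: this uses |X| + |Y| - |R| edges.\<close>

definition separated_inputs :: "('a \<times> 'b) set \<Rightarrow> 'a set \<Rightarrow> bool" where
  "separated_inputs E C \<longleftrightarrow> (\<forall>a\<in>C. \<forall>b\<in>C. \<forall>y. (a, y) \<in> E \<longrightarrow> (b, y) \<in> E \<longrightarrow> a = b)"

lemma separated_inputs_insert_collision:
  assumes "separated_inputs F C" and "\<not> separated_inputs (insert (x, y) F) C"
  shows "x \<in> C \<and> y \<in> snd ` F"
proof -
  from assms(2) obtain a b z where
    ab: "a \<in> C" "b \<in> C" "(a, z) \<in> insert (x, y) F" "(b, z) \<in> insert (x, y) F" "a \<noteq> b"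
    unfolding separated_inputs_def by blast
  with assms(1) consider "(a, z) = (x, y)" "(b, z) \<in> F" | "(b, z) = (x, y)" "(a, z) \<in> F"
    unfolding separated_inputs_def by blast
  then show ?thesis
  proof cases
    case 1
    then show ?thesis using ab(1) by (force intro: rev_image_eqI)
  next
    case 2
    then show ?thesis using ab(2) by (force intro: rev_image_eqI)
  qed
qed

lemma separated_inputs_insert_remove:
  "separated_inputs F C \<Longrightarrow> separated_inputs (insert (x, y) F) (C - {x})"
  unfolding separated_inputs_def by auto

lemma exists_separated_inputs:
  assumes "finite E" and "finite X"
  shows "\<exists>C\<subseteq>X. separated_inputs E C \<and> card X + card (snd ` E) \<le> card C + card E"
  using assms(1)
proof (induction E rule: finite_induct)
  case empty
  show ?case by (intro exI[of _ X]) (auto simp: separated_inputs_def)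
next
  case (insert e F)
  obtain x y where e: "e = (x, y)" by fastforce
  from insert.IH obtain C where C: "C \<subseteq> X" "separated_inputs F C"
    and bound: "card X + card (snd ` F) \<le> card C + card F" by blast
  have card_insert: "card (insert e F) = card F + 1" using insert by simp
  show ?case
  proof (cases "separated_inputs (insert e F) C")
    case True
    have "card (snd ` insert e F) \<le> card (snd ` F) + 1"
      using insert(1) by (simp add: card_insert_if)
    with bound have "card X + card (snd ` insert e F) \<le> card C + card (insert e F)"
      unfolding card_insert by linarith
    with True C(1) show ?thesis by (intro exI[of _ C] conjI)
  next
    case False
    from separated_inputs_insert_collision[OF C(2)] False
    have x: "x \<in> C" and y: "y \<in> snd ` F" unfolding e by auto
    have "finite C" using C(1) assms(2) finite_subset by blast
    with x have "card C > 0" using card_gt_0_iff by blast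
    with x have "card (C - {x}) + 1 = card C" by (simp add: card_Diff_singleton)
    moreover have "snd ` insert e F = snd ` F" using e y by auto
    ultimately have "card X + card (snd ` insert e F) \<le> card (C - {x}) + card (insert e F)"
      using bound unfolding card_insert by simp
    moreover have "separated_inputs (insert e F) (C - {x})"
      unfolding e by (rule separated_inputs_insert_remove[OF C(2)])
    moreover have "C - {x} \<subseteq> X" using C(1) by blast
    ultimately show ?thesis by (intro exI[of _ "C - {x}"] conjI)
  qed
qed

lemma separated_inputs_is_code:
  assumes "C \<subseteq> X" "finite X" "separated_inputs E C"
  shows "is_code X Y E C"
proof -
  have "card (Nbr E y \<inter> C) \<le> 1" for y
  proof -
    have "finite (Nbr E y \<inter> C)" using assms finite_subset by blast
    moreover have "\<forall>a\<in>Nbr E y \<inter> C. \<forall>b\<in>Nbr E y \<inter> C. a = b"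
      using assms(3) unfolding separated_inputs_def Nbr_def by auto
    ultimately show ?thesis using card_le_Suc0_iff_eq by fastforce
  qed
  then show ?thesis using assms unfolding is_code_def by auto
qed

lemma card_code_le_p_channel:
  assumes "finite X" "is_code X Y E C"
  shows "card C \<le> p_channel X Y E"
proof -
  have "{C. is_code X Y E C} \<subseteq> Pow X" unfolding is_code_def by auto
  then have "finite (card ` {C. is_code X Y E C})"
    using assms(1) finite_subset by (metis finite_Pow_iff finite_imageI)
  then show ?thesis unfolding p_channel_def using assms(2) by (auto intro: Max_ge)
qed

lemma p_channel_lower_bound:
  assumes "comb_channel X Y E"
  shows "int (card X) + int (card Y) - int (card E) \<le> int (p_channel X Y E)"
proof -
  have fin: "finite X" "finite Y" and sub: "E \<subseteq> X \<times> Y"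
    and outputs: "\<forall>y\<in>Y. \<exists>x. (x, y) \<in> E" using assms unfolding comb_channel_def by auto
  have "finite E" using sub fin finite_subset by blast
  then obtain C where C: "C \<subseteq> X" "separated_inputs E C"
    and bound: "card X + card (snd ` E) \<le> card C + card E"
    using exists_separated_inputs[OF _ fin(1)] by blast
  have "snd ` E = Y" using sub outputs by force
  with bound have "card X + card Y \<le> card C + card E" by simp
  moreover have "card C \<le> p_channel X Y E"
    using card_code_le_p_channel[OF fin(1) separated_inputs_is_code[OF C(1) fin(1) C(2)]] .
  ultimately show ?thesis by linarith
qed

lemma exists_surj_on_smaller:
  assumes "finite X" "finite R" "R \<noteq> {}" "card R \<le> card X"
  shows "\<exists>f. f ` X = R"
proof -
  obtain g where "g ` R \<subseteq> X" "inj_on g R" using card_le_inj[OF assms(2,1,4)] by blast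
  then show ?thesis using inj_on_iff_surj[OF assms(3), of X] by blast
qed

lemma exists_channel_covered_by:
  assumes "finite X" "finite Y" "X \<noteq> {}" "R \<noteq> {}" "R \<subseteq> Y" "card R \<le> card X"
  shows "\<exists>E. comb_channel X Y E \<and> card E = card X + card Y - card R \<and> output_covering X E R"
proof -
  have "finite R" using finite_subset[OF assms(5,2)] .
  then obtain f where f: "f ` X = R" using exists_surj_on_smaller[OF assms(1) _ assms(4,6)] by blast
  obtain x0 where x0: "x0 \<in> X" using assms(3) by blast
  define E where "E = (\<lambda>x. (x, f x)) ` X \<union> Pair x0 ` (Y - R)"
  have "(\<lambda>x. (x, f x)) ` X \<inter> Pair x0 ` (Y - R) = {}" using f by auto
  then have "card E = card ((\<lambda>x. (x, f x)) ` X) + card (Pair x0 ` (Y - R))"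
    unfolding E_def using assms(1,2) by (simp add: card_Un_disjoint)
  also have "\<dots> = card X + card (Y - R)"
    by (simp add: card_image inj_on_def)
  also have "\<dots> = card X + card Y - card R"
    using card_Diff_subset[OF \<open>finite R\<close> assms(5)] card_mono[OF assms(2,5)] by simp
  finally have "card E = card X + card Y - card R" .
  moreover have "comb_channel X Y E"
    unfolding comb_channel_def
  proof (intro conjI ballI)
    show "E \<subseteq> X \<times> Y" unfolding E_def using f x0 assms(5) by blast
    show "\<exists>x'. (x', y) \<in> E" if "y \<in> Y" for y
    proof (cases "y \<in> R")
      case True
      with f obtain x' where "x' \<in> X" "y = f x'" by blast
      then show ?thesis unfolding E_def by blast
    next
      case False
      with that show ?thesis unfolding E_def by blast
    qed
    show "\<exists>y. (x, y) \<in> E" if "x \<in> X" for x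
      using that unfolding E_def by blast
  qed (use assms(1,2) in auto)
  moreover have "output_covering X E R"
    unfolding output_covering_def E_def using f by blast
  ultimately show ?thesis by (intro exI[of _ E] conjI)
qed

theorem lemma9:
  shows "(\<forall>(X::'a set) (Y::'b set) E. comb_channel X Y E \<longrightarrow>
            int (card X) + int (card Y) - int (card E) \<le> int (p_channel X Y E))
       \<and> (\<forall>(X::'a set) (Y::'b set) R. finite X \<and> finite Y \<and> X \<noteq> {} \<and> Y \<noteq> {} \<and>
            R \<noteq> {} \<and> R \<subseteq> Y \<and> card R \<le> card X \<longrightarrow>
            (\<exists>E. comb_channel X Y E \<and> card E = card X + card Y - card R \<and>
                 output_covering X E R))"
  by (intro conjI allI impI; (elim conjE)?)
    (erule p_channel_lower_bound, rule exists_channel_covered_by)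

end
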